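(* Assume $\lambda<\lambda_c$. Let $x\neq y$ be two points of $\mathbb Z^d$ and let $(\Omega,\mathcal F,\mathbf P)$ be the probability space carrying the i.i.d. family $\{(\sigma^{z,\mathrm{sum}},R^{z,\max})\}_{z\in\mathbb Z^d}$ from which the clumps and clump heights $\{(\widehat C^z,\widehat\sigma^z)\}_{z}$ are built. There exists an extension $(\underline\Omega,\underline{\mathcal F},\underline{\mathbf P})$ of this probability space carrying another i.i.d. family $\{(\underline\sigma^{z,\mathrm{sum}},\underline R^{z,\max})\}_{z\in\mathbb Z^d}$ (with the same law) and a pair $(\widehat{\underline C}^y,\widehat{\underline\sigma}^y)$ built from this new family in the same way as $(\widehat C^y,\widehat\sigma^y)$ is built from the original family, such that: (1) $\widehat C^x\cup\widehat C^y\subseteq \widehat C^x\cup\widehat{\underline C}^y$ almost surely; (2) the pairs $(\widehat C^x,\widehat\sigma^x)$ and $(\widehat{\underline C}^y,\widehat{\underline\sigma}^y)$ are independent under $\underline{\mathbf P}$; (3) $(\widehat{\underline C}^y,\widehat{\underline\sigma}^y)$ under $\underline{\mathbf P}$ has the same law as $(\widehat C^y,\widehat\sigma^y)$ under $\mathbf P$.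
   Context: Discrete Boolean model on $\mathbb Z^d$ with parameter $\lambda>0$: let $\{M^z\}_{z\in\mathbb Z^d}$ be i.i.d. Poisson($\lambda$) random variables. At each site $z$, $M^z$ items arrive; the $i$-th carries a pair $(R^z_i,\sigma^z_i)$ with $R^z_i$ a positive integer (a half-side) and $\sigma^z_i\ge0$ (a height); these pairs are i.i.d. over $(z,i)$ and independent of the $M$'s. Let $R^{z,\max}=\max_{i\le M^z}R^z_i$ (with $R^{z,\max}=0$ if $M^z=0$) and $\sigma^{z,\mathrm{sum}}=\sum_{i=1}^{M^z}\sigma^z_i$. If $M^z\ge1$ there is a ball at $z$, namely $B^z=\{u\in\mathbb Z^d:\|u-z\|_\infty\le R^{z,\max}\}$; otherwise there is no ball at $z$. Two balls are connected if they intersect. The clump $\widehat C^z$ of $z$ is empty if no ball covers $z$; otherwise it is the largest union of connected balls containing a ball that covers $z$ (i.e. the union of the balls in the connected component of such a ball). The clump height is $\widehat\sigma^z=\sum_{u\in\widehat C^z}\sigma^{u,\mathrm{sum}}$ ($=0$ if $\widehat C^z=\emptyset$). $\lambda_c$ denotes the critical value of $\lambda$ below which every clump is a.s. finite and the number of lattice points in a clump has a finite exponential moment. *)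

theory Defs
  imports "HOL-Probability.Probability"
begin

text \<open>Lattice points of Z^d are vectors int^'d (d = CARD('d), an arbitrary finite index type).
A configuration assigns to each site z the pair (sigma^{z,sum}, R^{z,max}) :: real \<times> nat,
with R^{z,max} = 0 iff no item arrived at z (all half-sides R_i are positive integers).\<close>

type_synonym 'd config = "int ^ 'd \<Rightarrow> real \<times> nat"

definition has_ball :: "'d::finite config \<Rightarrow> int ^ 'd \<Rightarrow> bool" where
  "has_ball F z \<longleftrightarrow> snd (F z) > 0"

definition ball_at :: "'d::finite config \<Rightarrow> int ^ 'd \<Rightarrow> (int ^ 'd) set" where
  "ball_at F z = {u. \<forall>i. \<bar>u $ i - z $ i\<bar> \<le> int (snd (F z))}"

definition ball_adj :: "'d::finite config \<Rightarrow> ((int ^ 'd) \<times> (int ^ 'd)) set" where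
  "ball_adj F = {(z, w). has_ball F z \<and> has_ball F w \<and> ball_at F z \<inter> ball_at F w \<noteq> {}}"

definition clump :: "'d::finite config \<Rightarrow> int ^ 'd \<Rightarrow> (int ^ 'd) set" where
  "clump F x = (\<Union>{ball_at F w | z w. has_ball F z \<and> x \<in> ball_at F z \<and> (z, w) \<in> (ball_adj F)\<^sup>*})"

text \<open>Clump height: sum of sigma^{u,sum} over lattice points u of the clump
(Isabelle's finite sum; clumps are a.s. finite in the subcritical regime).\<close>
definition clump_height :: "'d::finite config \<Rightarrow> int ^ 'd \<Rightarrow> real" where
  "clump_height F x = (\<Sum>u\<in>clump F x. fst (F u))"

text \<open>Measurable space for (clump, height): sets of lattice points carry the sigma-algebra
generated by the evaluation events {A. z \<in> A}; heights carry the Borel sigma-algebra.\<close>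
definition point_sets_space :: "(int ^ 'd::finite) set measure" where
  "point_sets_space = sigma UNIV {{A. z \<in> A} | z. True}"

definition clump_space :: "((int ^ 'd::finite) set \<times> real) measure" where
  "clump_space = point_sets_space \<Otimes>\<^sub>M borel"

text \<open>Law of (sigma^{sum}, R^{max}) at one site: M ~ Poisson(lam), then M i.i.d. items (R_i, sigma_i)
with law nu; sigma^{sum} = sum of sigma_i, R^{max} = max of R_i (0 if M = 0).\<close>
definition site_law :: "real \<Rightarrow> (nat \<times> real) measure \<Rightarrow> (real \<times> nat) measure" where
  "site_law lam nu =
     measure_pmf (poisson_pmf lam) \<bind>
       (\<lambda>n. distr (PiM {..<n} (\<lambda>_. nu)) borel
              (\<lambda>\<omega>. ((\<Sum>i<n. snd (\<omega> i)), Max (insert 0 ((\<lambda>i. fst (\<omega> i)) ` {..<n})))))"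

definition canonical_model :: "'d::finite itself \<Rightarrow> real \<Rightarrow> (nat \<times> real) measure \<Rightarrow> 'd config measure" where
  "canonical_model _ lam nu = PiM UNIV (\<lambda>_. site_law lam nu)"

text \<open>Subcritical behaviour at intensity lam: every clump a.s. finite and the number of lattice
points of a clump (that of the origin, by translation invariance) has a finite exponential moment.\<close>
definition subcritical :: "'d::finite itself \<Rightarrow> real \<Rightarrow> (nat \<times> real) measure \<Rightarrow> bool" where
  "subcritical t lam nu \<longleftrightarrow>
     (AE F in canonical_model t lam nu. \<forall>z. finite (clump F z)) \<and>
     (\<exists>\<theta>>0. (\<integral>\<^sup>+ F. ennreal (exp (\<theta> * real (card (clump F (0::int^'d))))) \<partial>canonical_model t lam nu) < \<infinity>)"

definition lambda_c :: "'d::finite itself \<Rightarrow> (nat \<times> real) measure \<Rightarrow> ereal" where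
  "lambda_c t nu = Sup {ereal l0 | l0. 0 < l0 \<and> (\<forall>l. 0 < l \<and> l < l0 \<longrightarrow> subcritical t l nu)}"

end

theory Submission
  imports Defs
begin

(* Let F be the configuration of site variables and F' an independent copy. Given the clump
   A = C^x(F), call a value at site j interacting if its ball meets A or x, or if j lies in A
   and the value carries a nonzero height. The new configuration G takes F' j whenever F j or F' j
   is interacting, and keeps F j otherwise.

   (1) Independence: swapping F j and F' j at every site where neither value is interacting
       preserves the law of (F, F') and changes neither the clump of x nor its height; it maps
       the event {C^x(F) = A, data of x in A0, G in B} onto a product event. Summing over the
       countably many finite values A of the clump shows that G is i.i.d. and independent of
       (C^x(F), sigma^x(F)).
   (2) Covering: a ball of F belonging to the clump of y but not to A is disjoint from A and x,
       so under G it can only grow and stays connected; hence C^y(F) is contained in A union C^y(G). *)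

section \<open>Cubes, adjacency and the component of a point\<close>

definition cube :: "int^'d::finite \<Rightarrow> nat \<Rightarrow> (int^'d) set" where
  "cube z r = {u. \<forall>i. \<bar>u $ i - z $ i\<bar> \<le> int r}"

lemma ball_at_cube: "ball_at F z = cube z (snd (F z))"
  by (simp add: ball_at_def cube_def)

lemma center_in_cube: "z \<in> cube z r"
  by (simp add: cube_def)

lemma cube_mono: "r \<le> r' \<Longrightarrow> cube z r \<subseteq> cube z r'"
  by (auto simp: cube_def) (meson of_nat_le_iff order_trans)

lemma ball_adj_iff: "(z, w) \<in> ball_adj F \<longleftrightarrow>
  0 < snd (F z) \<and> 0 < snd (F w) \<and> cube z (snd (F z)) \<inter> cube w (snd (F w)) \<noteq> {}"
  by (simp add: ball_adj_def has_ball_def ball_at_cube)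

definition reaches :: "'d::finite config \<Rightarrow> int^'d \<Rightarrow> int^'d \<Rightarrow> bool" where
  "reaches F x v \<longleftrightarrow> (\<exists>z. has_ball F z \<and> x \<in> ball_at F z \<and> (z, v) \<in> (ball_adj F)\<^sup>*)"

lemma clump_reaches: "clump F x = \<Union>{ball_at F w | w. reaches F x w}"
  unfolding clump_def reaches_def by blast

lemma reaches_trans: "reaches F x v \<Longrightarrow> (v, w) \<in> (ball_adj F)\<^sup>* \<Longrightarrow> reaches F x w"
  unfolding reaches_def by (meson rtrancl_trans)

lemma reaches_has_ball: "reaches F x v \<Longrightarrow> has_ball F v"
  unfolding reaches_def by (auto elim: rtranclE simp: ball_adj_def)

lemma reaches_subset_clump: "reaches F x v \<Longrightarrow> ball_at F v \<subseteq> clump F x"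
  unfolding clump_reaches by blast

lemma ball_reached_or_apart:
  assumes "has_ball F v"
  shows "reaches F x v \<or> ball_at F v \<inter> insert x (clump F x) = {}"
proof (rule ccontr)
  assume "\<not> ?thesis"
  then have not_reached: "\<not> reaches F x v" and meets: "ball_at F v \<inter> insert x (clump F x) \<noteq> {}"
    by auto
  show False
  proof (cases "x \<in> ball_at F v")
    case True
    then show False using assms not_reached unfolding reaches_def by blast
  next
    case False
    with meets obtain u where u: "u \<in> ball_at F v" "u \<in> clump F x" by auto
    then obtain w where w: "reaches F x w" "u \<in> ball_at F w" unfolding clump_reaches by blast
    have "(w, v) \<in> ball_adj F"
      using w u assms reaches_has_ball[OF w(1)] unfolding ball_adj_def by auto
    then show False using reaches_trans[OF w(1)] not_reached by blast
  qed
qed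

section \<open>Measurability of clumps and clump heights\<close>

abbreviation config_space :: "'d::finite config measure" where
  "config_space \<equiv> PiM UNIV (\<lambda>_. borel)"

lemma measurable_snd_count_space[measurable]:
  "(snd :: real \<times> nat \<Rightarrow> nat) \<in> measurable borel (count_space UNIV)"
proof -
  have "(snd :: real \<times> nat \<Rightarrow> nat) \<in> borel_measurable borel"
    by (intro borel_measurable_continuous_onI continuous_intros)
  then show ?thesis by (simp add: measurable_cong_sets[OF refl sets_borel_eq_count_space[symmetric]])
qed

lemma measurable_fst_borel[measurable]: "(fst :: real \<times> nat \<Rightarrow> real) \<in> borel_measurable borel"
  by (intro borel_measurable_continuous_onI continuous_intros)

text \<open>Connectedness by a chain of n adjacent balls is a countable Boolean combination of
  conditions on finitely many sites, hence measurable.\<close>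
lemma pred_ball_adj_relpow:
  "Measurable.pred config_space (\<lambda>F::'d::finite config. (z, w) \<in> (ball_adj F) ^^ n)"
proof (induction n arbitrary: w)
  case 0
  then show ?case by simp
next
  case (Suc n)
  have eq: "(\<lambda>F::'d config. (z, w) \<in> (ball_adj F) ^^ Suc n) =
     (\<lambda>F. \<exists>v. (z, v) \<in> (ball_adj F) ^^ n \<and>
        (0 < snd (F v) \<and> 0 < snd (F w) \<and> cube v (snd (F v)) \<inter> cube w (snd (F w)) \<noteq> {}))"
    by (auto simp: relpow.simps ball_adj_iff[symmetric])
  show ?case unfolding eq using Suc by measurable
qed

lemma pred_mem_clump[measurable]:
  "Measurable.pred config_space (\<lambda>F::'d::finite config. u \<in> clump F x)"
proof -
  have eq: "(\<lambda>F::'d config. u \<in> clump F x) = (\<lambda>F. \<exists>z w. 0 < snd (F z) \<and> x \<in> cube z (snd (F z)) \<and>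
      (\<exists>n. (z, w) \<in> (ball_adj F) ^^ n) \<and> u \<in> cube w (snd (F w)))"
    unfolding clump_def by (auto simp: has_ball_def ball_at_cube rtrancl_power fun_eq_iff)
  show ?thesis unfolding eq using pred_ball_adj_relpow by measurable
qed

lemma measurable_clump:
  "(\<lambda>F::'d::finite config. clump F x) \<in> measurable config_space point_sets_space"
  unfolding point_sets_space_def
proof (rule measurable_measure_of)
  fix Y :: "(int^'d) set set" assume "Y \<in> {{A. z \<in> A} |z. True}"
  then obtain z where Y: "Y = {A. z \<in> A}" by auto
  have "(\<lambda>F::'d config. clump F x) -` Y \<inter> space config_space = {F \<in> space config_space. z \<in> clump F x}"
    by (auto simp: Y)
  also have "\<dots> \<in> sets (config_space :: 'd config measure)" by measurable
  finally show "(\<lambda>F::'d config. clump F x) -` Y \<inter> space config_space \<in> sets config_space" .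
qed auto

lemma sets_clump_eq[measurable]:
  "{F::'d::finite config. clump F x = A} \<in> sets config_space"
proof -
  have "{F::'d config. clump F x = A} = {F \<in> space config_space. \<forall>u. u \<in> clump F x \<longleftrightarrow> u \<in> A}"
    by (auto simp: space_PiM)
  also have "\<dots> \<in> sets config_space" by measurable
  finally show ?thesis .
qed

text \<open>Finite clumps take countably many values, which makes case distinctions on the clump
  measurable.\<close>
lemma sets_clump_finite[measurable]:
  "{F::'d::finite config. finite (clump F x)} \<in> sets config_space"
proof -
  have "{F::'d config. finite (clump F x)} = (\<Union>A\<in>Collect finite. {F. clump F x = A})"
    by auto
  also have "\<dots> \<in> sets config_space"
    by (intro sets.countable_UN'' countable_Collect_finite) auto
  finally show ?thesis .
qed

lemma measurable_by_clump_cases: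
  fixes g :: "'b \<Rightarrow> 'd::finite config"
  assumes g: "g \<in> measurable M config_space"
    and fin: "\<And>A. finite A \<Longrightarrow> \<exists>k \<in> measurable M N. \<forall>w\<in>space M. clump (g w) x = A \<longrightarrow> f w = k w"
    and inf: "\<exists>k \<in> measurable M N. \<forall>w\<in>space M. infinite (clump (g w) x) \<longrightarrow> f w = k w"
  shows "f \<in> measurable M N"
proof (rule measurable_piecewise_restrict)
  let ?C = "(\<lambda>A. {w \<in> space M. clump (g w) x = A}) ` Collect finite \<union>
    {{w \<in> space M. infinite (clump (g w) x)}}"
  show "countable ?C" by (intro countable_Un countable_image countable_Collect_finite) auto
  have events: "{w \<in> space M. clump (g w) x = A} \<in> sets M"
      "{w \<in> space M. infinite (clump (g w) x)} \<in> sets M" for A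
  proof -
    have "{w \<in> space M. clump (g w) x = A} = g -` {F. clump F x = A} \<inter> space M"
      "{w \<in> space M. infinite (clump (g w) x)} = space M - g -` {F. finite (clump F x)} \<inter> space M"
      by auto
    then show "{w \<in> space M. clump (g w) x = A} \<in> sets M"
      "{w \<in> space M. infinite (clump (g w) x)} \<in> sets M"
      using measurable_sets[OF g sets_clump_eq] measurable_sets[OF g sets_clump_finite] by auto
  qed
  show "\<Omega> \<inter> space M \<in> sets M" if "\<Omega> \<in> ?C" for \<Omega>
    using that events by (auto simp: Int_absorb2)
  show "space M \<subseteq> \<Union> ?C" by auto
  show "f \<in> restrict_space M \<Omega> \<rightarrow>\<^sub>M N" if "\<Omega> \<in> ?C" for \<Omega>
  proof -
    have "\<exists>k \<in> measurable M N. \<forall>w\<in>\<Omega>. f w = k w"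
      using that fin inf by fastforce
    then obtain k where k: "k \<in> measurable M N" "\<forall>w\<in>\<Omega>. f w = k w" by blast
    show ?thesis
      by (rule measurable_cong[THEN iffD1, OF _ measurable_restrict_space1[OF k(1)]])
        (use k that in \<open>auto simp: space_restrict_space\<close>)
  qed
qed

text \<open>The height is a finite sum on each finite value of the clump, and 0 on infinite clumps.\<close>
lemma measurable_clump_height: "(\<lambda>F::'d::finite config. clump_height F x) \<in> borel_measurable config_space"
proof (rule measurable_by_clump_cases[where g="\<lambda>F. F" and x=x])
  show "\<exists>k\<in>borel_measurable config_space. \<forall>F\<in>space config_space. clump F x = A \<longrightarrow> clump_height F x = k F" for A
    by (intro bexI[of _ "\<lambda>F. \<Sum>u\<in>A. fst (F u)"]) (auto simp: clump_height_def)
  show "\<exists>k\<in>borel_measurable config_space. \<forall>F\<in>space config_space. infinite (clump F x) \<longrightarrow> clump_height F x = k F"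
    by (intro bexI[of _ "\<lambda>F. 0"]) (auto simp: clump_height_def)
qed simp

definition clump_data :: "int^'d::finite \<Rightarrow> 'd config \<Rightarrow> (int^'d) set \<times> real" where
  "clump_data x F = (clump F x, clump_height F x)"

lemma measurable_clump_data: "clump_data x \<in> measurable (config_space :: 'd::finite config measure) clump_space"
  unfolding clump_data_def clump_space_def
  by (intro measurable_Pair measurable_clump measurable_clump_height)

section \<open>Site-wise swapping preserves a product of pair laws\<close>

definition zip_pair :: "('i \<Rightarrow> 'v) \<times> ('i \<Rightarrow> 'v) \<Rightarrow> 'i \<Rightarrow> 'v \<times> 'v" where
  "zip_pair p = (\<lambda>i. (fst p i, snd p i))"

definition unzip_pair :: "('i \<Rightarrow> 'v \<times> 'v) \<Rightarrow> ('i \<Rightarrow> 'v) \<times> ('i \<Rightarrow> 'v)" where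
  "unzip_pair G = (\<lambda>i. fst (G i), \<lambda>i. snd (G i))"

lemma prod_emb_UNIV:
  "space S = UNIV \<Longrightarrow> prod_emb UNIV (\<lambda>_. S) J (Pi\<^sub>E J a) = {f. \<forall>i\<in>J. f i \<in> a i}"
  by (auto simp: prod_emb_def PiE_def Pi_def extensional_def)

lemma space_PiM_UNIV: "space S = UNIV \<Longrightarrow> space (PiM UNIV (\<lambda>_. S)) = UNIV"
  by (simp add: space_PiM)

lemma measurable_zip_pair:
  assumes "space S = UNIV"
  shows "zip_pair \<in> measurable (PiM (UNIV::'i set) (\<lambda>_. S) \<Otimes>\<^sub>M PiM UNIV (\<lambda>_. S)) (PiM UNIV (\<lambda>_. S \<Otimes>\<^sub>M S))"
  unfolding zip_pair_def
  by (rule measurable_PiM_single') (auto simp: space_pair_measure space_PiM assms)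

lemma measurable_unzip_pair:
  assumes "space S = UNIV"
  shows "unzip_pair \<in> measurable (PiM UNIV (\<lambda>_. S \<Otimes>\<^sub>M S)) (PiM (UNIV::'i set) (\<lambda>_. S) \<Otimes>\<^sub>M PiM UNIV (\<lambda>_. S))"
  unfolding unzip_pair_def
  by (intro measurable_Pair measurable_PiM_single') (auto simp: space_pair_measure space_PiM assms)

text \<open>Cylinders over finitely many sites whose sections are measurable rectangles; they form an
  intersection-stable generator of the sigma-algebra of the product of pair measures.\<close>
definition rect_cylinders :: "'v measure \<Rightarrow> ('i \<Rightarrow> 'v \<times> 'v) set set" where
  "rect_cylinders S = {{f. \<forall>i\<in>J. f i \<in> A i} | A J.
     finite J \<and> A \<in> J \<rightarrow> {a \<times> b | a b. a \<in> sets S \<and> b \<in> sets S}}"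

lemma UNIV_rectangle: "space S = UNIV \<Longrightarrow> UNIV \<in> {a \<times> b | a b. a \<in> sets S \<and> b \<in> sets S}"
  by (intro CollectI exI[of _ UNIV]) (metis sets.top[of S] UNIV_Times_UNIV)

lemma Int_stable_rect_cylinders:
  fixes S :: "'v measure"
  assumes sp: "space S = UNIV"
  shows "Int_stable (rect_cylinders S :: ('i \<Rightarrow> 'v \<times> 'v) set set)"
proof (rule Int_stableI)
  let ?R = "{a \<times> b | a b. a \<in> sets S \<and> b \<in> sets S}"
  fix X Y :: "('i \<Rightarrow> 'v \<times> 'v) set" assume "X \<in> rect_cylinders S" "Y \<in> rect_cylinders S"
  then obtain A1 J1 A2 J2 where X: "X = {f. \<forall>i\<in>J1. f i \<in> A1 i}" "finite J1" "A1 \<in> J1 \<rightarrow> ?R"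
    and Y: "Y = {f. \<forall>i\<in>J2. f i \<in> A2 i}" "finite J2" "A2 \<in> J2 \<rightarrow> ?R"
    unfolding rect_cylinders_def by blast
  define A where "A i = (if i \<in> J1 then A1 i else UNIV) \<inter> (if i \<in> J2 then A2 i else UNIV)" for i
  have rect_Int: "R1 \<inter> R2 \<in> ?R" if "R1 \<in> ?R" "R2 \<in> ?R" for R1 R2
  proof -
    from that obtain a1 b1 a2 b2 where "R1 = a1 \<times> b1" "R2 = a2 \<times> b2"
      "a1 \<in> sets S" "b1 \<in> sets S" "a2 \<in> sets S" "b2 \<in> sets S" by blast
    then show ?thesis by (intro CollectI exI[of _ "a1 \<inter> a2"] exI[of _ "b1 \<inter> b2"]) auto
  qed
  have "A i \<in> ?R" for i
  proof -
    have "(if i \<in> J1 then A1 i else UNIV) \<in> ?R" "(if i \<in> J2 then A2 i else UNIV) \<in> ?R"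
      by (simp_all add: funcset_mem[OF X(3)] funcset_mem[OF Y(3)] UNIV_rectangle[OF sp] del: mem_Collect_eq)
    then show ?thesis unfolding A_def by (rule rect_Int)
  qed
  then have "A \<in> J1 \<union> J2 \<rightarrow> ?R" by blast
  moreover have "X \<inter> Y = {f. \<forall>i\<in>J1 \<union> J2. f i \<in> A i}"
    by (auto simp: X Y A_def)
  ultimately show "X \<inter> Y \<in> rect_cylinders S"
    using X(2) Y(2) unfolding rect_cylinders_def by blast
qed

lemma sets_PiM_pair_rect_cylinders:
  assumes sp: "space S = UNIV"
  shows "sets (PiM (UNIV::'i set) (\<lambda>_. S \<Otimes>\<^sub>M S)) = sigma_sets UNIV (rect_cylinders S)"
proof -
  let ?R = "{a \<times> b | a b. a \<in> sets S \<and> b \<in> sets S}"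
  have PiE_UNIV: "(\<Pi>\<^sub>E i\<in>(UNIV::'i set). UNIV) = (UNIV :: ('i \<Rightarrow> 'v \<times> 'v) set)"
    by auto
  have "sets (PiM (UNIV::'i set) (\<lambda>_. S \<Otimes>\<^sub>M S)) = sets (PiM (UNIV::'i set) (\<lambda>_. sigma UNIV ?R))"
    using sp by (intro sets_PiM_cong) (auto simp: sets_pair_measure)
  also have "\<dots> = sets (sigma (\<Pi>\<^sub>E i\<in>(UNIV::'i set). UNIV)
      {{f\<in>(\<Pi>\<^sub>E i\<in>(UNIV::'i set). UNIV). \<forall>i\<in>J. f i \<in> A i} | A J. J \<in> {J. finite J} \<and> A \<in> Pi J (\<lambda>_. ?R)})"
    by (rule sets_PiM_sigma) (use UNIV_rectangle[OF sp] in \<open>auto intro!: exI[of _ "{UNIV}"]\<close>)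
  also have "\<dots> = sigma_sets UNIV (rect_cylinders S)"
    unfolding rect_cylinders_def PiE_UNIV by (subst sets_measure_of) auto
  finally show ?thesis .
qed

lemma distr_zip_pair:
  fixes S :: "'v measure"
  assumes S: "prob_space S" and sp: "space S = UNIV"
  shows "distr (PiM (UNIV::'i set) (\<lambda>_. S) \<Otimes>\<^sub>M PiM UNIV (\<lambda>_. S)) (PiM UNIV (\<lambda>_. S \<Otimes>\<^sub>M S)) zip_pair
     = PiM UNIV (\<lambda>_. S \<Otimes>\<^sub>M S)"
  (is "distr ?QQ ?P zip_pair = ?P")
proof (rule measure_eqI_generator_eq[where E="rect_cylinders S" and \<Omega>=UNIV and A="\<lambda>_. UNIV"])
  interpret S: prob_space S by fact
  interpret Q: prob_space "PiM (UNIV::'i set) (\<lambda>_. S)" by (intro prob_space_PiM S)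
  interpret QQ: pair_prob_space "PiM (UNIV::'i set) (\<lambda>_. S)" "PiM (UNIV::'i set) (\<lambda>_. S)" ..
  interpret D: prob_space "distr ?QQ ?P zip_pair"
    by (rule QQ.prob_space_distr[OF measurable_zip_pair[OF sp]])
  show "Int_stable (rect_cylinders S)" by (rule Int_stable_rect_cylinders[OF sp])
  show "sets (distr ?QQ ?P zip_pair) = sigma_sets UNIV (rect_cylinders S)"
    "sets ?P = sigma_sets UNIV (rect_cylinders S)"
    using sets_PiM_pair_rect_cylinders[OF sp] by simp_all
  show "range (\<lambda>_. UNIV) \<subseteq> rect_cylinders S"
    unfolding rect_cylinders_def by (auto intro!: exI[of _ "{}"])
  show "emeasure (distr ?QQ ?P zip_pair) UNIV \<noteq> \<infinity>"
    using D.emeasure_finite by simp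
  fix X :: "('i \<Rightarrow> 'v \<times> 'v) set" assume "X \<in> rect_cylinders S"
  then obtain A J where X: "X = {f. \<forall>i\<in>J. f i \<in> A i}" "finite J"
    and A: "\<forall>i\<in>J. \<exists>a b. A i = a \<times> b \<and> a \<in> sets S \<and> b \<in> sets S"
    unfolding rect_cylinders_def by blast
  then obtain a b where ab: "\<And>i. i \<in> J \<Longrightarrow> A i = a i \<times> b i \<and> a i \<in> sets S \<and> b i \<in> sets S"
    by metis
  have sp2: "space (S \<Otimes>\<^sub>M S) = UNIV" by (simp add: space_pair_measure sp)
  have X_emb: "X = prod_emb UNIV (\<lambda>_. S \<Otimes>\<^sub>M S) J (Pi\<^sub>E J (\<lambda>i. a i \<times> b i))"
    using ab by (auto simp: X prod_emb_UNIV[OF sp2])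
  have pre: "zip_pair -` X \<inter> space ?QQ =
      prod_emb UNIV (\<lambda>_. S) J (Pi\<^sub>E J a) \<times> prod_emb UNIV (\<lambda>_. S) J (Pi\<^sub>E J b)"
    using ab by (auto simp: X prod_emb_UNIV[OF sp] zip_pair_def space_pair_measure space_PiM sp)
  have X_sets: "X \<in> sets ?P"
    unfolding X_emb using ab X(2) by (intro sets_PiM_I) auto
  have "emeasure (distr ?QQ ?P zip_pair) X =
      emeasure ?QQ (prod_emb UNIV (\<lambda>_. S) J (Pi\<^sub>E J a) \<times> prod_emb UNIV (\<lambda>_. S) J (Pi\<^sub>E J b))"
    by (simp add: emeasure_distr[OF measurable_zip_pair[OF sp] X_sets] pre)
  also have "\<dots> = (\<Prod>i\<in>J. emeasure S (a i)) * (\<Prod>i\<in>J. emeasure S (b i))"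
    using ab X(2) S by (simp add: Q.emeasure_pair_measure_Times sets_PiM_I emeasure_PiM_emb)
  also have "\<dots> = (\<Prod>i\<in>J. emeasure (S \<Otimes>\<^sub>M S) (a i \<times> b i))"
    using ab by (simp add: prod.distrib S.emeasure_pair_measure_Times)
  also have "\<dots> = emeasure ?P X"
    unfolding X_emb using ab X(2) S by (subst emeasure_PiM_emb) (auto intro: prob_space_pair)
  finally show "emeasure (distr ?QQ ?P zip_pair) X = emeasure ?P X" .
qed simp_all

definition swap_outside :: "'v set \<Rightarrow> 'v \<times> 'v \<Rightarrow> 'v \<times> 'v" where
  "swap_outside m p = (if p \<in> (-m) \<times> (-m) then (snd p, fst p) else p)"

lemma measurable_swap_outside:
  assumes "m \<in> sets S" "space S = UNIV"
  shows "swap_outside m \<in> measurable (S \<Otimes>\<^sub>M S) (S \<Otimes>\<^sub>M S)"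
proof -
  have "(-m) \<times> (-m) \<in> sets (S \<Otimes>\<^sub>M S)"
    using assms by (metis Compl_eq_Diff_UNIV pair_measureI sets.compl_sets)
  then show ?thesis unfolding swap_outside_def
    by (intro measurable_If_set) (auto simp: space_pair_measure assms intro: measurable_Pair)
qed

lemma distr_swap_outside:
  assumes S: "prob_space S" and m: "m \<in> sets S" and sp: "space S = UNIV"
  shows "distr (S \<Otimes>\<^sub>M S) (S \<Otimes>\<^sub>M S) (swap_outside m) = S \<Otimes>\<^sub>M S"
proof (rule measure_eqI)
  interpret S: prob_space S by fact
  interpret SS: pair_prob_space S S ..
  let ?U = "(-m) \<times> (-m)" and ?sw = "\<lambda>(x, y). (y, x)"
  have U: "?U \<in> sets (S \<Otimes>\<^sub>M S)"
    using m sp by (metis Compl_eq_Diff_UNIV pair_measureI sets.compl_sets)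
  have sw: "?sw \<in> measurable (S \<Otimes>\<^sub>M S) (S \<Otimes>\<^sub>M S)" by measurable
  have sp2: "space (S \<Otimes>\<^sub>M S) = UNIV" by (simp add: space_pair_measure sp)
  fix B assume "B \<in> sets (distr (S \<Otimes>\<^sub>M S) (S \<Otimes>\<^sub>M S) (swap_outside m))"
  then have B: "B \<in> sets (S \<Otimes>\<^sub>M S)" by simp
  have pre: "swap_outside m -` B \<inter> space (S \<Otimes>\<^sub>M S) = (B - ?U) \<union> (?sw -` (B \<inter> ?U) \<inter> space (S \<Otimes>\<^sub>M S))"
    by (auto simp: swap_outside_def sp2 split: if_splits)
  have swB: "?sw -` (B \<inter> ?U) \<inter> space (S \<Otimes>\<^sub>M S) \<in> sets (S \<Otimes>\<^sub>M S)"
    using B U by (intro measurable_sets[OF sw]) auto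
  have "emeasure (distr (S \<Otimes>\<^sub>M S) (S \<Otimes>\<^sub>M S) (swap_outside m)) B
      = emeasure (S \<Otimes>\<^sub>M S) (B - ?U) + emeasure (S \<Otimes>\<^sub>M S) (?sw -` (B \<inter> ?U) \<inter> space (S \<Otimes>\<^sub>M S))"
    unfolding emeasure_distr[OF measurable_swap_outside[OF m sp] B] pre
    using B U swB by (intro plus_emeasure[symmetric]) (auto simp: sp2)
  also have "emeasure (S \<Otimes>\<^sub>M S) (?sw -` (B \<inter> ?U) \<inter> space (S \<Otimes>\<^sub>M S)) =
      emeasure (distr (S \<Otimes>\<^sub>M S) (S \<Otimes>\<^sub>M S) ?sw) (B \<inter> ?U)"
    using B U by (intro emeasure_distr[symmetric] sw) auto
  also have "distr (S \<Otimes>\<^sub>M S) (S \<Otimes>\<^sub>M S) ?sw = S \<Otimes>\<^sub>M S"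
    by (rule SS.distr_pair_swap[symmetric])
  also have "emeasure (S \<Otimes>\<^sub>M S) (B - ?U) + emeasure (S \<Otimes>\<^sub>M S) (B \<inter> ?U) = emeasure (S \<Otimes>\<^sub>M S) B"
    using B U by (subst plus_emeasure) (auto intro!: arg_cong[where f="emeasure (S \<Otimes>\<^sub>M S)"])
  finally show "emeasure (distr (S \<Otimes>\<^sub>M S) (S \<Otimes>\<^sub>M S) (swap_outside m)) B = emeasure (S \<Otimes>\<^sub>M S) B" .
qed simp

lemma measurable_swap_outside_sites:
  assumes m: "\<And>i. mf i \<in> sets S" and sp: "space S = UNIV"
  shows "(\<lambda>G i. swap_outside (mf i) (G i)) \<in> measurable (PiM (UNIV::'i set) (\<lambda>_. S \<Otimes>\<^sub>M S)) (PiM UNIV (\<lambda>_. S \<Otimes>\<^sub>M S))"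
  by (rule measurable_PiM_single')
    (auto intro: measurable_compose[OF _ measurable_swap_outside[OF m sp]] simp: space_PiM space_pair_measure sp)

lemma distr_swap_outside_sites:
  fixes S :: "'v measure" and mf :: "'i \<Rightarrow> 'v set"
  assumes S: "prob_space S" and m: "\<And>i. mf i \<in> sets S" and sp: "space S = UNIV"
  shows "distr (PiM (UNIV::'i set) (\<lambda>_. S \<Otimes>\<^sub>M S)) (PiM UNIV (\<lambda>_. S \<Otimes>\<^sub>M S)) (\<lambda>G i. swap_outside (mf i) (G i))
     = PiM UNIV (\<lambda>_. S \<Otimes>\<^sub>M S)"
proof -
  let ?P = "PiM (UNIV::'i set) (\<lambda>_. S \<Otimes>\<^sub>M S)" and ?T = "\<lambda>G i. swap_outside (mf i) (G i)"
  interpret S: prob_space S by fact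
  interpret SS: pair_prob_space S S ..
  interpret PP: product_prob_space "\<lambda>_. S \<Otimes>\<^sub>M S" "UNIV::'i set" by unfold_locales
  have sp2: "space (S \<Otimes>\<^sub>M S) = UNIV" by (simp add: space_pair_measure sp)
  show ?thesis
  proof (rule PP.PiM_eq)
    fix J :: "'i set" and F assume J: "finite J" and F: "\<And>j. j \<in> J \<Longrightarrow> F j \<in> sets (S \<Otimes>\<^sub>M S)"
    have pre: "?T -` prod_emb UNIV (\<lambda>_. S \<Otimes>\<^sub>M S) J (Pi\<^sub>E J F) \<inter> space ?P
       = prod_emb UNIV (\<lambda>_. S \<Otimes>\<^sub>M S) J (Pi\<^sub>E J (\<lambda>j. swap_outside (mf j) -` F j))"
      by (simp add: prod_emb_UNIV sp2 space_PiM_UNIV)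
    have swap_F: "emeasure (S \<Otimes>\<^sub>M S) (swap_outside (mf j) -` F j) = emeasure (S \<Otimes>\<^sub>M S) (F j)"
      if "j \<in> J" for j
      using emeasure_distr[OF measurable_swap_outside[OF m sp] F[OF that]]
      by (simp add: distr_swap_outside[OF S m sp] sp2)
    have sets_swap_F: "swap_outside (mf j) -` F j \<in> sets (S \<Otimes>\<^sub>M S)" if "j \<in> J" for j
      using measurable_sets[OF measurable_swap_outside[OF m sp] F[OF that]] by (simp add: sp2)
    have "emeasure (distr ?P ?P ?T) (prod_emb UNIV (\<lambda>_. S \<Otimes>\<^sub>M S) J (Pi\<^sub>E J F))
        = emeasure ?P (prod_emb UNIV (\<lambda>_. S \<Otimes>\<^sub>M S) J (Pi\<^sub>E J (\<lambda>j. swap_outside (mf j) -` F j)))"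
      using F J by (subst emeasure_distr[OF measurable_swap_outside_sites[of mf, OF m sp]])
        (auto simp: pre intro!: sets_PiM_I)
    also have "\<dots> = (\<Prod>j\<in>J. emeasure (S \<Otimes>\<^sub>M S) (F j))"
      using J sets_swap_F swap_F by (subst PP.emeasure_PiM_emb) auto
    finally show "emeasure (distr ?P ?P ?T) (prod_emb UNIV (\<lambda>_. S \<Otimes>\<^sub>M S) J (Pi\<^sub>E J F))
       = (\<Prod>j\<in>J. emeasure (S \<Otimes>\<^sub>M S) (F j))" .
  qed simp
qed

definition differ_only_outside :: "('i \<Rightarrow> 'v set) \<Rightarrow> ('i \<Rightarrow> 'v) \<Rightarrow> ('i \<Rightarrow> 'v) \<Rightarrow> bool" where
  "differ_only_outside mf F G \<longleftrightarrow> (\<forall>j. G j = F j \<or> (F j \<notin> mf j \<and> G j \<notin> mf j))"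

lemma differ_only_outside_sym: "differ_only_outside mf F G \<Longrightarrow> differ_only_outside mf G F"
  unfolding differ_only_outside_def by metis

text \<open>Let E be an event insensitive to changes of the
  configuration outside mf, and let the second configuration replace the first one exactly at the
  sites where one of the two values lies in mf. Then the first configuration lying in E and the
  replaced one lying in B are independent events with the original probabilities: swapping the
  two values at every other site maps this event onto the rectangle E \<times> B and preserves the law.\<close>
lemma emeasure_replace_inside:
  fixes S :: "'v measure" and mf :: "'i \<Rightarrow> 'v set"
  assumes S: "prob_space S" and m: "\<And>i. mf i \<in> sets S" and sp: "space S = UNIV"
    and E: "E \<in> sets (PiM (UNIV::'i set) (\<lambda>_. S))"
    and E_invariant: "\<And>F G. F \<in> E \<Longrightarrow> differ_only_outside mf F G \<Longrightarrow> G \<in> E"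
    and B: "B \<in> sets (PiM (UNIV::'i set) (\<lambda>_. S))"
  shows "emeasure (PiM (UNIV::'i set) (\<lambda>_. S) \<Otimes>\<^sub>M PiM UNIV (\<lambda>_. S))
      {p. fst p \<in> E \<and> (\<lambda>i. if fst p i \<in> mf i \<or> snd p i \<in> mf i then snd p i else fst p i) \<in> B}
    = emeasure (PiM (UNIV::'i set) (\<lambda>_. S)) E * emeasure (PiM (UNIV::'i set) (\<lambda>_. S)) B"
proof -
  let ?Q = "PiM (UNIV::'i set) (\<lambda>_. S)"
  let ?QQ = "?Q \<Otimes>\<^sub>M ?Q" and ?P = "PiM (UNIV::'i set) (\<lambda>_. S \<Otimes>\<^sub>M S)"
  let ?T = "\<lambda>G i. swap_outside (mf i) (G i)"
  define swap where "swap = unzip_pair \<circ> (?T \<circ> zip_pair)"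
  have T_zip: "?T \<circ> zip_pair \<in> measurable ?QQ ?P"
    by (rule measurable_comp[OF measurable_zip_pair[OF sp] measurable_swap_outside_sites[of mf, OF m sp]])
  interpret Q: prob_space ?Q by (intro prob_space_PiM S)
  interpret QQ: pair_prob_space ?Q ?Q ..
  have swap_meas: "swap \<in> measurable ?QQ ?QQ"
    unfolding swap_def by (rule measurable_comp[OF T_zip measurable_unzip_pair[OF sp]])
  have "distr ?QQ ?QQ swap = distr (distr (distr ?QQ ?P zip_pair) ?P ?T) ?QQ unzip_pair"
    unfolding swap_def
    by (simp add: distr_distr[OF measurable_unzip_pair[OF sp] T_zip]
        distr_distr[OF measurable_swap_outside_sites[of mf, OF m sp] measurable_zip_pair[OF sp]])
  also have "\<dots> = distr ?QQ ?QQ (unzip_pair \<circ> zip_pair)"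
    by (simp add: distr_zip_pair[OF S sp] distr_swap_outside_sites[of S mf, OF S m sp]
        distr_distr[OF measurable_unzip_pair[OF sp] measurable_zip_pair[OF sp], symmetric])
  also have "unzip_pair \<circ> zip_pair = (\<lambda>p. p)"
    by (simp add: fun_eq_iff unzip_pair_def zip_pair_def)
  finally have swap_law: "distr ?QQ ?QQ swap = ?QQ" by simp
  have fst_swap: "differ_only_outside mf (fst p) (fst (swap p))"
    and snd_swap: "snd (swap p) = (\<lambda>i. if fst p i \<in> mf i \<or> snd p i \<in> mf i then snd p i else fst p i)" for p
    by (auto simp: differ_only_outside_def swap_def unzip_pair_def swap_outside_def zip_pair_def fun_eq_iff)
  have fst_swap_E: "fst (swap p) \<in> E \<longleftrightarrow> fst p \<in> E" for p
    using E_invariant fst_swap[of p] differ_only_outside_sym by blast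
  have "{p. fst p \<in> E \<and> (\<lambda>i. if fst p i \<in> mf i \<or> snd p i \<in> mf i then snd p i else fst p i) \<in> B}
      = swap -` (E \<times> B) \<inter> space ?QQ"
    by (rule set_eqI) (simp add: mem_Times_iff fst_swap_E snd_swap space_pair_measure space_PiM_UNIV sp)
  also have "emeasure ?QQ \<dots> = emeasure (distr ?QQ ?QQ swap) (E \<times> B)"
    using E B by (intro emeasure_distr[symmetric] swap_meas) auto
  also have "\<dots> = emeasure ?Q E * emeasure ?Q B"
    using E B by (simp add: swap_law Q.emeasure_pair_measure_Times)
  finally show ?thesis .
qed

section \<open>Resampling the configuration near the clump of x\<close>

text \<open>Values that do not interact can be changed
  without affecting the clump of x or its height.\<close>
definition interacts :: "(int^'d::finite) set \<Rightarrow> int^'d \<Rightarrow> int^'d \<Rightarrow> (real \<times> nat) set" where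
  "interacts A x j = {v. (0 < snd v \<and> cube j (snd v) \<inter> insert x A \<noteq> {}) \<or> (j \<in> A \<and> fst v \<noteq> 0)}"

lemma interacts_if_ball_meets:
  "has_ball F j \<Longrightarrow> ball_at F j \<inter> insert x A \<noteq> {} \<Longrightarrow> F j \<in> interacts A x j"
  by (auto simp: interacts_def has_ball_def ball_at_cube)

lemma sets_interacts[measurable]: "interacts A x j \<in> sets (borel :: (real \<times> nat) measure)"
proof -
  have "interacts A x j =
      {v \<in> space borel. (0 < snd v \<and> cube j (snd v) \<inter> insert x A \<noteq> {}) \<or> (j \<in> A \<and> fst v \<noteq> 0)}"
    by (auto simp: interacts_def)
  also have "\<dots> \<in> sets borel" by measurable
  finally show ?thesis .
qed

lemma reaches_differ_only_outside:
  assumes A: "clump F x = A" and D: "differ_only_outside (interacts A x) F G"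
    and r: "reaches F x w"
  shows "reaches G x w \<and> G w = F w"
proof -
  have keep_reached: "G v = F v" if "reaches F x v" for v
  proof -
    have "ball_at F v \<inter> insert x A \<noteq> {}"
      using reaches_subset_clump[OF that] center_in_cube[of v] A by (auto simp: ball_at_cube)
    then have "F v \<in> interacts A x v"
      using interacts_if_ball_meets reaches_has_ball[OF that] by blast
    then show ?thesis using D by (auto simp: differ_only_outside_def)
  qed
  obtain z where z: "has_ball F z" "x \<in> ball_at F z" "(z, w) \<in> (ball_adj F)\<^sup>*"
    using r unfolding reaches_def by blast
  have "(z, w) \<in> (ball_adj G)\<^sup>*"
    using z(3)
  proof (induction rule: rtrancl_induct)
    case (step v u)
    have "reaches F x v" "reaches F x u"
      using z step(1,2) unfolding reaches_def by (meson rtrancl.rtrancl_into_rtrancl)+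
    then have "(v, u) \<in> ball_adj G"
      using step(2) keep_reached by (simp add: ball_adj_iff)
    then show ?case using step(3) by simp
  qed simp
  moreover have "G z = F z"
    using keep_reached z unfolding reaches_def by blast
  ultimately have "reaches G x w"
    using z unfolding reaches_def by (intro exI[of _ z]) (auto simp: has_ball_def ball_at_cube)
  then show ?thesis using keep_reached[OF r] by simp
qed

lemma reaches_differ_only_outside_back:
  assumes A: "clump F x = A" and D: "differ_only_outside (interacts A x) F G"
    and r: "reaches G x w"
  shows "reaches F x w \<and> G w = F w"
proof -
  have keep: "G j = F j" if "G j \<in> interacts A x j" for j
    using D that by (auto simp: differ_only_outside_def)
  obtain z where z: "has_ball G z" "x \<in> ball_at G z" "(z, w) \<in> (ball_adj G)\<^sup>*"
    using r unfolding reaches_def by blast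
  show ?thesis
    using z(3)
  proof (induction rule: rtrancl_induct)
    case base
    have "G z = F z" using z keep interacts_if_ball_meets[of G z x A] by blast
    then show ?case using z unfolding reaches_def by (auto simp: has_ball_def ball_at_cube)
  next
    case (step v u)
    then have "ball_at G v \<subseteq> A"
      using reaches_subset_clump[of F x v] A unfolding ball_at_cube by simp
    moreover have "ball_at G u \<inter> ball_at G v \<noteq> {}" "has_ball G u"
      using step(2) by (auto simp: ball_adj_def)
    ultimately have "G u = F u" using keep interacts_if_ball_meets[of G u x A] by blast
    then have "(v, u) \<in> ball_adj F" using step(2,3) by (simp add: ball_adj_iff)
    then show ?case using step(3) \<open>G u = F u\<close> reaches_trans by blast
  qed
qed

lemma clump_differ_only_outside:
  assumes A: "clump F x = A" and D: "differ_only_outside (interacts A x) F G"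
  shows "clump G x = A \<and> clump_height G x = clump_height F x"
proof -
  have "clump G x = A"
    unfolding A[symmetric] clump_reaches
    using reaches_differ_only_outside[OF A D] reaches_differ_only_outside_back[OF A D]
    by (auto simp: ball_at_cube) metis+
  moreover have "fst (G u) = fst (F u)" if "u \<in> A" for u
  proof -
    have "G u = F u \<or> (F u \<notin> interacts A x u \<and> G u \<notin> interacts A x u)"
      using D by (simp add: differ_only_outside_def)
    with that show ?thesis by (auto simp: interacts_def)
  qed
  ultimately show ?thesis
    using A by (simp add: clump_height_def)
qed

definition resample :: "(int^'d::finite) set \<Rightarrow> int^'d \<Rightarrow> 'd config \<times> 'd config \<Rightarrow> 'd config" where
  "resample A x p = (\<lambda>j. if fst p j \<in> interacts A x j \<or> snd p j \<in> interacts A x j then snd p j else fst p j)"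

text \<open>A ball of F apart from the clump of x and from x itself can only grow under resampling:
  its value is kept unless the new value interacts, in which case the new ball is larger.\<close>
lemma resample_keeps_apart_ball:
  assumes A: "A = clump F x"
    and apart: "has_ball F v" "ball_at F v \<inter> insert x A = {}"
  shows "has_ball (resample A x (F, F')) v \<and> ball_at F v \<subseteq> ball_at (resample A x (F, F')) v"
proof -
  let ?G = "resample A x (F, F')"
  have "v \<notin> A" using apart center_in_cube[of v] by (auto simp: ball_at_cube)
  then have F_not: "F v \<notin> interacts A x v"
    using apart by (auto simp: interacts_def has_ball_def ball_at_cube)
  have "snd (F v) \<le> snd (?G v)"
  proof (cases "F' v \<in> interacts A x v")
    case True
    then have "cube v (snd (F' v)) \<inter> insert x A \<noteq> {}" using \<open>v \<notin> A\<close> by (auto simp: interacts_def)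
    then have "\<not> snd (F' v) \<le> snd (F v)"
      using apart(2) cube_mono[of "snd (F' v)" "snd (F v)" v] by (auto simp: ball_at_cube)
    then show ?thesis using True by (simp add: resample_def)
  next
    case False
    then show ?thesis using F_not by (simp add: resample_def)
  qed
  then show ?thesis
    using apart cube_mono by (auto simp: has_ball_def ball_at_cube)
qed

text \<open>A chain of balls from y that avoids the clump of x
  consists of balls apart from it, which survive (and grow) under resampling.\<close>
lemma clump_resample_cover:
  "clump F y \<subseteq> clump F x \<union> clump (resample (clump F x) x (F, F')) y"
proof
  define A where "A = clump F x"
  let ?G = "resample A x (F, F')"
  define apart where "apart v \<longleftrightarrow> has_ball F v \<and> ball_at F v \<inter> insert x A = {}" for v
  have apart_or_reached: "apart v \<or> reaches F x v" if "has_ball F v" for v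
    using ball_reached_or_apart[OF that, of x] that by (auto simp: apart_def A_def)
  have grows: "has_ball ?G v \<and> ball_at F v \<subseteq> ball_at ?G v" if "apart v" for v
    using resample_keeps_apart_ball[OF A_def] that by (auto simp: apart_def)
  have chain: "(z, v) \<in> (ball_adj ?G)\<^sup>* \<and> apart v"
    if "(z, v) \<in> (ball_adj F)\<^sup>*" "has_ball F z" "\<not> reaches F x v" for z v
    using that(1,3)
  proof (induction rule: rtrancl_induct)
    case base
    then show ?case using apart_or_reached[OF that(2)] by auto
  next
    case (step v u)
    have "\<not> reaches F x v" using step reaches_trans by blast
    with step.IH have IH: "(z, v) \<in> (ball_adj ?G)\<^sup>*" "apart v" by auto
    have "apart u" using step(2,4) apart_or_reached by (auto simp: ball_adj_def)
    then have "(v, u) \<in> ball_adj ?G"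
      using step(2) grows[OF IH(2)] grows[of u] unfolding ball_adj_def by auto
    then show ?case using IH \<open>apart u\<close> by auto
  qed
  fix u assume "u \<in> clump F y"
  then obtain z w where zw: "has_ball F z" "y \<in> ball_at F z" "(z, w) \<in> (ball_adj F)\<^sup>*" "u \<in> ball_at F w"
    unfolding clump_def by blast
  show "u \<in> A \<union> clump ?G y"
  proof (cases "reaches F x w")
    case True
    then show ?thesis using reaches_subset_clump zw(4) A_def by blast
  next
    case False
    then have path: "(z, w) \<in> (ball_adj ?G)\<^sup>*" "apart w" using chain[OF zw(3) zw(1)] by auto
    have "apart z" using False reaches_trans zw(1,3) apart_or_reached by blast
    then show ?thesis
      unfolding clump_def using grows[OF \<open>apart z\<close>] grows[OF path(2)] zw path(1) by blast
  qed
qed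

lemma measurable_resample:
  "resample A x \<in> measurable (config_space \<Otimes>\<^sub>M config_space) (config_space :: 'd::finite config measure)"
  unfolding resample_def
proof (rule measurable_PiM_single')
  fix j :: "int^'d"
  show "(\<lambda>p. if fst p j \<in> interacts A x j \<or> snd p j \<in> interacts A x j then snd p j else fst p j)
      \<in> (config_space \<Otimes>\<^sub>M config_space) \<rightarrow>\<^sub>M borel"
    by measurable
qed (auto simp: space_PiM)

text \<open>The new configuration: resample near the clump of x when it is finite (which happens
  almost surely below the critical intensity); otherwise just take the independent copy.\<close>
definition resample_clump :: "int^'d::finite \<Rightarrow> 'd config \<times> 'd config \<Rightarrow> 'd config" where
  "resample_clump x p = (if finite (clump (fst p) x) then resample (clump (fst p) x) x p else snd p)"

lemma measurable_resample_clump: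
  "resample_clump x \<in> measurable (config_space \<Otimes>\<^sub>M config_space) (config_space :: 'd::finite config measure)"
proof (rule measurable_by_clump_cases[where g=fst and x=x])
  show "\<exists>k\<in>(config_space \<Otimes>\<^sub>M config_space) \<rightarrow>\<^sub>M config_space. \<forall>p\<in>space (config_space \<Otimes>\<^sub>M config_space).
      clump (fst p) x = A \<longrightarrow> resample_clump x p = k p" if "finite A" for A
    using that by (intro bexI[of _ "resample A x"] measurable_resample) (auto simp: resample_clump_def)
  show "\<exists>k\<in>(config_space \<Otimes>\<^sub>M config_space) \<rightarrow>\<^sub>M config_space. \<forall>p\<in>space (config_space \<Otimes>\<^sub>M config_space).
      infinite (clump (fst p) x) \<longrightarrow> resample_clump x p = k p"
    by (intro bexI[of _ snd] measurable_snd) (auto simp: resample_clump_def)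
qed simp

lemma sets_PiM_site_borel:
  "sets S = sets borel \<Longrightarrow> sets (PiM UNIV (\<lambda>_. S)) = sets (config_space :: 'd::finite config measure)"
  by (intro sets_PiM_cong) auto

lemma measurable_clump_data_site:
  "sets S = sets borel \<Longrightarrow> clump_data x \<in> measurable (PiM UNIV (\<lambda>_. S)) clump_space"
  by (subst measurable_cong_sets[OF sets_PiM_site_borel refl]) (auto intro: measurable_clump_data)

lemma measurable_resample_clump_site:
  fixes x :: "int^'d::finite"
  assumes "sets S = sets borel"
  shows "resample_clump x \<in> measurable (PiM UNIV (\<lambda>_. S) \<Otimes>\<^sub>M PiM UNIV (\<lambda>_. S)) (PiM UNIV (\<lambda>_. S))"
proof -
  have sQ: "sets (PiM UNIV (\<lambda>_. S)) = sets (config_space :: 'd config measure)"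
    by (rule sets_PiM_site_borel[OF assms])
  show ?thesis
    by (subst measurable_cong_sets[OF sets_pair_measure_cong[OF sQ sQ] sQ]) (rule measurable_resample_clump)
qed

text \<open>For a fixed value A of the clump of x, the clump data of x and the resampled configuration
  are independent: this is the swapping argument with the non-interacting values.\<close>
lemma emeasure_resample_fixed_clump:
  fixes S :: "(real \<times> nat) measure" and x :: "int^'d::finite"
  assumes S: "prob_space S" and sS: "sets S = sets borel"
    and A0: "A0 \<in> sets clump_space" and B: "B \<in> sets (PiM UNIV (\<lambda>_. S))"
  shows "emeasure (PiM UNIV (\<lambda>_. S) \<Otimes>\<^sub>M PiM UNIV (\<lambda>_. S))
      {p. clump (fst p) x = A \<and> clump_data x (fst p) \<in> A0 \<and> resample A x p \<in> B}
    = emeasure (PiM UNIV (\<lambda>_. S)) {F. clump F x = A \<and> clump_data x F \<in> A0} * emeasure (PiM UNIV (\<lambda>_. S)) B"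
proof -
  let ?Q = "PiM (UNIV :: (int^'d) set) (\<lambda>_. S)"
  let ?E = "{F. clump F x = A \<and> clump_data x F \<in> A0}"
  have sp: "space S = UNIV" using sets_eq_imp_space_eq[OF sS] by simp
  have E: "?E \<in> sets ?Q"
  proof -
    have "?E = {F. clump F x = A} \<inter> (clump_data x -` A0 \<inter> space ?Q)"
      by (auto simp: space_PiM_UNIV sp)
    also have "\<dots> \<in> sets ?Q"
      using sets_clump_eq[of x A] measurable_sets[OF measurable_clump_data[of x] A0]
      by (simp add: sets_PiM_site_borel[OF sS] space_PiM sp)
    finally show ?thesis .
  qed
  have "emeasure (?Q \<Otimes>\<^sub>M ?Q) {p. fst p \<in> ?E \<and> resample A x p \<in> B} = emeasure ?Q ?E * emeasure ?Q B"
    unfolding resample_def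
  proof (rule emeasure_replace_inside[OF S _ sp E _ B])
    show "interacts A x j \<in> sets S" for j using sS by simp
    fix F G assume F: "F \<in> ?E" and D: "differ_only_outside (interacts A x) F G"
    then show "G \<in> ?E"
      using clump_differ_only_outside[OF _ D] by (auto simp: clump_data_def)
  qed
  then show ?thesis by simp
qed

text \<open>An event is split according to the value of an almost surely finite clump; the finite
  sets of lattice points form a countable family of disjoint slices.\<close>
lemma emeasure_decompose_finite_clump:
  fixes g :: "'b \<Rightarrow> 'd::finite config"
  assumes g: "g \<in> measurable M config_space" and P: "{w \<in> space M. P w} \<in> sets M"
    and fin: "AE w in M. finite (clump (g w) x)"
  shows "emeasure M {w \<in> space M. P w} =
    (\<integral>\<^sup>+A. emeasure M {w \<in> space M. clump (g w) x = A \<and> P w} \<partial>count_space (Collect finite))"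
proof -
  let ?W = "\<lambda>A. {w \<in> space M. clump (g w) x = A \<and> P w}"
  have W: "?W A \<in> sets M" for A
  proof -
    have "?W A = (g -` {F. clump F x = A} \<inter> space M) \<inter> {w \<in> space M. P w}" by auto
    then show ?thesis using measurable_sets[OF g sets_clump_eq] P by (simp add: sets.Int)
  qed
  have "emeasure M {w \<in> space M. P w} = emeasure M (\<Union>A\<in>Collect finite. ?W A)"
  proof (rule emeasure_eq_AE)
    show "AE w in M. w \<in> {w \<in> space M. P w} \<longleftrightarrow> w \<in> (\<Union>A\<in>Collect finite. ?W A)"
      using fin by eventually_elim auto
    show "(\<Union>A\<in>Collect finite. ?W A) \<in> sets M"
      using W by (intro sets.countable_UN'' countable_Collect_finite) auto
  qed (rule P)
  also have "\<dots> = (\<integral>\<^sup>+A. emeasure M (?W A) \<partial>count_space (Collect finite))"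
    using W by (intro emeasure_UN_countable countable_Collect_finite) (auto simp: disjoint_family_on_def)
  finally show ?thesis .
qed

text \<open>Both sides are split according to the value of the clump of x.\<close>
lemma distr_clump_data_resample_clump:
  fixes S :: "(real \<times> nat) measure" and x :: "int^'d::finite"
  assumes S: "prob_space S" and sS: "sets S = sets borel"
    and fin: "AE F in PiM UNIV (\<lambda>_. S). finite (clump F x)"
  shows "distr (PiM UNIV (\<lambda>_. S) \<Otimes>\<^sub>M PiM UNIV (\<lambda>_. S)) (clump_space \<Otimes>\<^sub>M PiM UNIV (\<lambda>_. S))
           (\<lambda>p. (clump_data x (fst p), resample_clump x p))
       = distr (PiM UNIV (\<lambda>_. S)) clump_space (clump_data x) \<Otimes>\<^sub>M PiM UNIV (\<lambda>_. S)"
proof -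
  let ?Q = "PiM (UNIV::(int^'d) set) (\<lambda>_. S)"
  let ?QQ = "?Q \<Otimes>\<^sub>M ?Q"
  let ?D = "distr ?Q clump_space (clump_data x)"
  let ?\<psi> = "\<lambda>p. (clump_data x (fst p), resample_clump x p)"
  interpret Q: prob_space ?Q by (intro prob_space_PiM S)
  interpret QQ: pair_prob_space ?Q ?Q ..
  have id_meas: "(\<lambda>F. F) \<in> measurable ?Q config_space"
    by (rule measurable_ident_sets[OF sets_PiM_site_borel[OF sS]])
  have fst_meas: "fst \<in> measurable ?QQ config_space"
    using measurable_compose[OF measurable_fst[of ?Q ?Q] id_meas] by simp
  note data_meas = measurable_clump_data_site[OF sS, of x]
  note resample_meas = measurable_resample_clump_site[OF sS, of x]
  have spQQ: "space ?QQ = UNIV"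
    using sets_eq_imp_space_eq[OF sS] by (simp add: space_pair_measure space_PiM_UNIV)
  have psi_meas: "?\<psi> \<in> measurable ?QQ (clump_space \<Otimes>\<^sub>M ?Q)"
    using data_meas resample_meas by measurable
  interpret D: prob_space ?D by (rule Q.prob_space_distr[OF data_meas])
  have fin2: "AE p in ?QQ. finite (clump (fst p) x)"
    by (rule AE_distrD[OF measurable_fst]) (subst Q.distr_pair_fst, rule fin)
  show ?thesis
  proof (rule pair_measure_eqI[symmetric])
    show "sigma_finite_measure ?D" "sigma_finite_measure ?Q" by unfold_locales
    show "sets (?D \<Otimes>\<^sub>M ?Q) = sets (distr ?QQ (clump_space \<Otimes>\<^sub>M ?Q) ?\<psi>)" by simp
  next
    fix A0 B assume "A0 \<in> sets ?D" and B: "B \<in> sets ?Q"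
    then have A0: "A0 \<in> sets clump_space" by simp
    have event: "{p \<in> space ?QQ. clump_data x (fst p) \<in> A0 \<and> resample_clump x p \<in> B} = ?\<psi> -` (A0 \<times> B) \<inter> space ?QQ"
      by auto
    have "emeasure (distr ?QQ (clump_space \<Otimes>\<^sub>M ?Q) ?\<psi>) (A0 \<times> B)
        = emeasure ?QQ {p \<in> space ?QQ. clump_data x (fst p) \<in> A0 \<and> resample_clump x p \<in> B}"
      using A0 B by (simp add: emeasure_distr[OF psi_meas] event)
    also have "\<dots> = (\<integral>\<^sup>+A. emeasure ?QQ {p \<in> space ?QQ. clump (fst p) x = A \<and>
        clump_data x (fst p) \<in> A0 \<and> resample_clump x p \<in> B} \<partial>count_space (Collect finite))"
      using A0 B measurable_sets[OF psi_meas, of "A0 \<times> B"]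
      by (intro emeasure_decompose_finite_clump[OF fst_meas _ fin2]) (simp add: event)
    also have "\<dots> = (\<integral>\<^sup>+A. emeasure ?Q {F \<in> space ?Q. clump F x = A \<and> clump_data x F \<in> A0} *
        emeasure ?Q B \<partial>count_space (Collect finite))"
    proof (rule nn_integral_cong)
      fix A :: "(int^'d) set" assume "A \<in> space (count_space (Collect finite))"
      then have "{p \<in> space ?QQ. clump (fst p) x = A \<and> clump_data x (fst p) \<in> A0 \<and> resample_clump x p \<in> B}
          = {p. clump (fst p) x = A \<and> clump_data x (fst p) \<in> A0 \<and> resample A x p \<in> B}"
        by (auto simp: resample_clump_def spQQ)
      then show "emeasure ?QQ {p \<in> space ?QQ. clump (fst p) x = A \<and> clump_data x (fst p) \<in> A0 \<and> resample_clump x p \<in> B}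
          = emeasure ?Q {F \<in> space ?Q. clump F x = A \<and> clump_data x F \<in> A0} * emeasure ?Q B"
        using emeasure_resample_fixed_clump[OF S sS A0 B, of x A] sets_eq_imp_space_eq[OF sS]
        by (simp add: space_PiM_UNIV)
    qed
    also have "\<dots> = emeasure ?Q {F \<in> space ?Q. clump_data x F \<in> A0} * emeasure ?Q B"
    proof -
      have "{F \<in> space ?Q. clump_data x F \<in> A0} = clump_data x -` A0 \<inter> space ?Q" by auto
      then have "{F \<in> space ?Q. clump_data x F \<in> A0} \<in> sets ?Q"
        using measurable_sets[OF data_meas A0] by simp
      then show ?thesis
        by (simp add: nn_integral_multc emeasure_decompose_finite_clump[OF id_meas _ fin])
    qed
    also have "emeasure ?Q {F \<in> space ?Q. clump_data x F \<in> A0} = emeasure ?D A0"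
    proof -
      have "{F \<in> space ?Q. clump_data x F \<in> A0} = clump_data x -` A0 \<inter> space ?Q" by auto
      then show ?thesis using A0 by (simp add: emeasure_distr[OF data_meas])
    qed
    finally show "emeasure ?D A0 * emeasure ?Q B = emeasure (distr ?QQ (clump_space \<Otimes>\<^sub>M ?Q) ?\<psi>) (A0 \<times> B)"
      by simp
  qed
qed

lemma AE_clump_resample_cover:
  fixes Q :: "'d::finite config measure"
  assumes Q: "prob_space Q" and fin: "AE F in Q. finite (clump F x)"
  shows "AE p in Q \<Otimes>\<^sub>M Q. clump (fst p) y \<subseteq> clump (fst p) x \<union> clump (resample_clump x p) y"
proof -
  have "AE p in Q \<Otimes>\<^sub>M Q. finite (clump (fst p) x)"
    by (rule AE_distrD[OF measurable_fst]) (subst prob_space.distr_pair_fst[OF Q], rule fin)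
  then show ?thesis
  proof (rule eventually_mono)
    fix p :: "'d config \<times> 'd config"
    assume "finite (clump (fst p) x)"
    then show "clump (fst p) y \<subseteq> clump (fst p) x \<union> clump (resample_clump x p) y"
      using clump_resample_cover[of "fst p" y x "snd p"] by (simp add: resample_clump_def)
  qed
qed

section \<open>Transferring laws to the extension\<close>

lemma distr_pair_snd_prob:
  assumes "prob_space D" "sigma_finite_measure Q"
  shows "distr (D \<Otimes>\<^sub>M Q) Q snd = Q"
proof (rule measure_eqI)
  interpret D: prob_space D by fact
  interpret Q: sigma_finite_measure Q by fact
  fix A assume A: "A \<in> sets (distr (D \<Otimes>\<^sub>M Q) Q snd)"
  then have "emeasure (distr (D \<Otimes>\<^sub>M Q) Q snd) A = emeasure (D \<Otimes>\<^sub>M Q) (space D \<times> A)"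
    by (auto simp: emeasure_distr space_pair_measure dest: sets.sets_into_space
        intro!: arg_cong2[where f=emeasure])
  with A show "emeasure (distr (D \<Otimes>\<^sub>M Q) Q snd) A = emeasure Q A"
    by (simp add: Q.emeasure_pair_measure_Times D.emeasure_space_1)
qed simp

lemma indep_of_product_joint_law:
  assumes N: "prob_space N" and U: "U \<in> measurable N A" and V: "V \<in> measurable N B"
    and joint: "distr N (A \<Otimes>\<^sub>M B) (\<lambda>\<omega>. (U \<omega>, V \<omega>)) = DA \<Otimes>\<^sub>M DB"
    and DA: "prob_space DA" "sets DA = sets A" and DB: "prob_space DB" "sets DB = sets B"
    and h: "h \<in> measurable B C"
  shows "distr N B V = DB" and "prob_space.indep_var N A U C (\<lambda>\<omega>. h (V \<omega>))"
proof -
  interpret N: prob_space N by fact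
  interpret DA: prob_space DA by fact
  interpret DB: prob_space DB by fact
  have UV: "(\<lambda>\<omega>. (U \<omega>, V \<omega>)) \<in> measurable N (A \<Otimes>\<^sub>M B)" using U V by measurable
  have law_of_proj: "distr N X (\<lambda>\<omega>. f (U \<omega>, V \<omega>)) = distr (DA \<Otimes>\<^sub>M DB) X f"
    if "f \<in> measurable (A \<Otimes>\<^sub>M B) X" for X f
    using distr_distr[OF that UV] joint by (simp add: comp_def)
  have "distr N A U = distr (DA \<Otimes>\<^sub>M DB) DA fst"
    using law_of_proj[of fst A] DA(2) by (simp cong: distr_cong)
  then have law_U: "distr N A U = DA" by (simp add: DB.distr_pair_fst)
  have "distr N B V = distr (DA \<Otimes>\<^sub>M DB) DB snd"
    using law_of_proj[of snd B] DB(2) by (simp cong: distr_cong)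
  then show law_V: "distr N B V = DB"
    using distr_pair_snd_prob[OF DA(1)] DB.sigma_finite_measure by simp
  have hV: "(\<lambda>\<omega>. h (V \<omega>)) \<in> measurable N C" using h V by measurable
  have h_DB: "h \<in> measurable DB C" using h DB(2) by (simp cong: measurable_cong_sets)
  have "distr N (A \<Otimes>\<^sub>M C) (\<lambda>\<omega>. (U \<omega>, h (V \<omega>))) = distr (DA \<Otimes>\<^sub>M DB) (A \<Otimes>\<^sub>M C) (\<lambda>(a, b). (a, h b))"
    using law_of_proj[of "\<lambda>(a, b). (a, h b)" "A \<Otimes>\<^sub>M C"] h by simp
  also have "\<dots> = distr DA A (\<lambda>a. a) \<Otimes>\<^sub>M distr DB C h"
    using DA(2) h_DB by (intro pair_measure_distr[symmetric])
      (auto intro: prob_space_imp_sigma_finite DB.prob_space_distr cong: measurable_cong_sets)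
  also have "distr DA A (\<lambda>a. a) = distr N A U" by (simp add: law_U distr_id2 DA(2))
  also have "distr DB C h = distr N C (\<lambda>\<omega>. h (V \<omega>))"
    using distr_distr[OF h V] law_V by (simp add: comp_def)
  finally show "N.indep_var A U C (\<lambda>\<omega>. h (V \<omega>))"
    by (simp add: N.indep_var_distribution_eq U hV)
qed

lemma iid_family_distr_PiM:
  fixes X :: "'i \<Rightarrow> 'a \<Rightarrow> 'b::topological_space"
  assumes M: "prob_space M" and indep: "prob_space.indep_vars M (\<lambda>_. borel) X UNIV"
    and law: "\<And>z. distr M borel (X z) = S" and sS: "sets S = sets borel"
  shows "(\<lambda>a z. X z a) \<in> measurable M (PiM UNIV (\<lambda>_. S))"
    and "distr M (PiM UNIV (\<lambda>_. S)) (\<lambda>a z. X z a) = PiM UNIV (\<lambda>_. S)"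
proof -
  interpret M: prob_space M by fact
  have X: "X z \<in> measurable M borel" for z
    using indep unfolding M.indep_vars_def by auto
  have sQ: "sets (PiM (UNIV :: 'i set) (\<lambda>_. S)) = sets (PiM UNIV (\<lambda>_. borel))"
    using sS by (intro sets_PiM_cong) auto
  have "(\<lambda>a z. X z a) \<in> measurable M (PiM UNIV (\<lambda>_. borel))"
    by (rule measurable_PiM_single') (auto simp: X space_PiM)
  then show meas: "(\<lambda>a z. X z a) \<in> measurable M (PiM UNIV (\<lambda>_. S))"
    using sQ by (simp cong: measurable_cong_sets)
  have "distr M (PiM UNIV (\<lambda>_. borel)) (\<lambda>a. \<lambda>i\<in>UNIV. X i a) = PiM UNIV (\<lambda>i. distr M borel (X i))"
    using M.indep_vars_iff_distr_eq_PiM[where I=UNIV and M'="\<lambda>_. borel" and X=X] X indep by simp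
  then show "distr M (PiM UNIV (\<lambda>_. S)) (\<lambda>a z. X z a) = PiM UNIV (\<lambda>_. S)"
    using sQ by (simp add: law restrict_UNIV cong: distr_cong)
qed

lemma iid_family_of_distr_PiM:
  fixes V :: "'a \<Rightarrow> 'i \<Rightarrow> 'b::topological_space"
  assumes N: "prob_space N" and V: "V \<in> measurable N (PiM UNIV (\<lambda>_. S))"
    and law: "distr N (PiM UNIV (\<lambda>_. S)) V = PiM UNIV (\<lambda>_. S)"
    and S: "prob_space S" and sS: "sets S = sets borel"
  shows "prob_space.indep_vars N (\<lambda>_. borel) (\<lambda>z \<omega>. V \<omega> z) UNIV"
    and "\<And>z. distr N borel (\<lambda>\<omega>. V \<omega> z) = S"
proof -
  interpret N: prob_space N by fact
  have sQ: "sets (PiM (UNIV :: 'i set) (\<lambda>_. S)) = sets (PiM UNIV (\<lambda>_. borel))"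
    using sS by (intro sets_PiM_cong) auto
  have comp: "(\<lambda>\<omega>. V \<omega> z) \<in> measurable N borel" for z
    using measurable_comp[OF V measurable_component_singleton[of z UNIV "\<lambda>_. S"]] sS
    by (simp add: comp_def cong: measurable_cong_sets)
  show law_z: "distr N borel (\<lambda>\<omega>. V \<omega> z) = S" for z
  proof -
    have "distr N borel (\<lambda>\<omega>. V \<omega> z) = distr (distr N (PiM UNIV (\<lambda>_. S)) V) S (\<lambda>F. F z)"
      using distr_distr[OF measurable_component_singleton[of z UNIV "\<lambda>_. S"] V] sS
      by (simp add: comp_def cong: distr_cong)
    also have "\<dots> = S" unfolding law by (rule distr_PiM_component) (auto intro: S)
    finally show ?thesis .
  qed
  have "distr N (PiM UNIV (\<lambda>_. borel)) (\<lambda>\<omega>. \<lambda>i\<in>UNIV. V \<omega> i) = PiM UNIV (\<lambda>i. distr N borel (\<lambda>\<omega>. V \<omega> i))"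
    using law sQ by (simp add: law_z restrict_UNIV cong: distr_cong)
  then show "N.indep_vars (\<lambda>_. borel) (\<lambda>z \<omega>. V \<omega> z) UNIV"
    using N.indep_vars_iff_distr_eq_PiM[where I=UNIV and M'="\<lambda>_. borel" and X="\<lambda>z \<omega>. V \<omega> z"] comp
    by simp
qed

lemma distr_pair_extension:
  assumes M: "prob_space M" and Q: "prob_space Q"
    and \<Phi>: "\<Phi> \<in> measurable M Q" and law: "distr M Q \<Phi> = Q"
  shows "(\<lambda>\<omega>. (\<Phi> (fst \<omega>), snd \<omega>)) \<in> measurable (M \<Otimes>\<^sub>M Q) (Q \<Otimes>\<^sub>M Q)"
    and "distr (M \<Otimes>\<^sub>M Q) (Q \<Otimes>\<^sub>M Q) (\<lambda>\<omega>. (\<Phi> (fst \<omega>), snd \<omega>)) = Q \<Otimes>\<^sub>M Q"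
proof -
  show "(\<lambda>\<omega>. (\<Phi> (fst \<omega>), snd \<omega>)) \<in> measurable (M \<Otimes>\<^sub>M Q) (Q \<Otimes>\<^sub>M Q)"
    using \<Phi> by measurable
  have "distr M Q \<Phi> \<Otimes>\<^sub>M distr Q Q (\<lambda>y. y) = distr (M \<Otimes>\<^sub>M Q) (Q \<Otimes>\<^sub>M Q) (\<lambda>(x, y). (\<Phi> x, y))"
    using \<Phi> Q by (intro pair_measure_distr) (auto intro: prob_space_imp_sigma_finite)
  then show "distr (M \<Otimes>\<^sub>M Q) (Q \<Otimes>\<^sub>M Q) (\<lambda>\<omega>. (\<Phi> (fst \<omega>), snd \<omega>)) = Q \<Otimes>\<^sub>M Q"
    by (simp add: law split_beta')
qed

lemma clump_finite_below_lambda_c: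
  assumes "0 < lam" and "ereal lam < lambda_c TYPE('d::finite) nu"
  shows "AE F in PiM UNIV (\<lambda>_. site_law lam nu). finite (clump F (x :: int^'d))"
proof -
  obtain l0 where "ereal lam < ereal l0" "\<forall>l. 0 < l \<and> l < l0 \<longrightarrow> subcritical TYPE('d) l nu"
    using assms(2) unfolding lambda_c_def by (auto simp: less_Sup_iff)
  then have "subcritical TYPE('d) lam nu" using assms(1) by auto
  then show ?thesis unfolding subcritical_def canonical_model_def by auto
qed

definition decoupled_config :: "int^'d::finite \<Rightarrow> ('a \<Rightarrow> 'd config) \<Rightarrow> 'a \<times> 'd config \<Rightarrow> 'd config" where
  "decoupled_config x \<Phi> \<omega> = resample_clump x (\<Phi> (fst \<omega>), snd \<omega>)"

lemma decoupled_config_properties: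
  fixes S :: "(real \<times> nat) measure" and \<Phi> :: "'a \<Rightarrow> 'd::finite config" and x y :: "int^'d"
  assumes M: "prob_space M" and S: "prob_space S" and sS: "sets S = sets borel"
    and \<Phi>: "\<Phi> \<in> measurable M (PiM UNIV (\<lambda>_. S))" "distr M (PiM UNIV (\<lambda>_. S)) \<Phi> = PiM UNIV (\<lambda>_. S)"
    and fin: "AE F in PiM UNIV (\<lambda>_. S). finite (clump F x)"
  shows "decoupled_config x \<Phi> \<in> measurable (M \<Otimes>\<^sub>M PiM UNIV (\<lambda>_. S)) (PiM UNIV (\<lambda>_. S))"
    and "distr (M \<Otimes>\<^sub>M PiM UNIV (\<lambda>_. S)) (PiM UNIV (\<lambda>_. S)) (decoupled_config x \<Phi>) = PiM UNIV (\<lambda>_. S)"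
    and "prob_space.indep_var (M \<Otimes>\<^sub>M PiM UNIV (\<lambda>_. S)) clump_space (\<lambda>\<omega>. clump_data x (\<Phi> (fst \<omega>)))
           clump_space (\<lambda>\<omega>. clump_data y (decoupled_config x \<Phi> \<omega>))"
    and "AE \<omega> in M \<Otimes>\<^sub>M PiM UNIV (\<lambda>_. S). clump (\<Phi> (fst \<omega>)) y \<subseteq> clump (\<Phi> (fst \<omega>)) x \<union> clump (decoupled_config x \<Phi> \<omega>) y"
proof -
  let ?Q = "PiM (UNIV :: (int^'d) set) (\<lambda>_. S)"
  let ?V = "decoupled_config x \<Phi>" and ?N = "M \<Otimes>\<^sub>M ?Q"
  let ?\<psi> = "\<lambda>p. (clump_data x (fst p), resample_clump x p)"
  define \<Psi> :: "'a \<times> 'd config \<Rightarrow> 'd config \<times> 'd config" where "\<Psi> \<omega> = (\<Phi> (fst \<omega>), snd \<omega>)" for \<omega>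
  interpret Q: prob_space ?Q by (intro prob_space_PiM S)
  have N: "prob_space ?N" by (intro prob_space_pair M Q.prob_space_axioms)
  note data_meas = measurable_clump_data_site[OF sS]
  note resample_meas = measurable_resample_clump_site[OF sS, of x]
  have \<Psi>: "\<Psi> \<in> measurable ?N (?Q \<Otimes>\<^sub>M ?Q)" "distr ?N (?Q \<Otimes>\<^sub>M ?Q) \<Psi> = ?Q \<Otimes>\<^sub>M ?Q"
    unfolding \<Psi>_def[abs_def] using distr_pair_extension[OF M Q.prob_space_axioms \<Phi>] by auto
  have V_eq: "?V = resample_clump x \<circ> \<Psi>" by (simp add: fun_eq_iff decoupled_config_def \<Psi>_def)
  have U: "(\<lambda>\<omega>. clump_data x (\<Phi> (fst \<omega>))) \<in> measurable ?N clump_space"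
    using \<Phi>(1) data_meas by measurable
  have psi: "?\<psi> \<in> measurable (?Q \<Otimes>\<^sub>M ?Q) (clump_space \<Otimes>\<^sub>M ?Q)"
    using data_meas resample_meas by measurable
  show V: "?V \<in> measurable ?N ?Q"
    unfolding V_eq using \<Psi>(1) resample_meas by (rule measurable_comp)
  have "distr ?N (clump_space \<Otimes>\<^sub>M ?Q) (\<lambda>\<omega>. (clump_data x (\<Phi> (fst \<omega>)), ?V \<omega>))
      = distr (distr ?N (?Q \<Otimes>\<^sub>M ?Q) \<Psi>) (clump_space \<Otimes>\<^sub>M ?Q) ?\<psi>"
    using distr_distr[OF psi \<Psi>(1)] by (simp add: comp_def decoupled_config_def \<Psi>_def)
  also have "\<dots> = distr ?Q clump_space (clump_data x) \<Otimes>\<^sub>M ?Q"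
    using \<Psi>(2) distr_clump_data_resample_clump[OF S sS fin] by simp
  finally have joint: "distr ?N (clump_space \<Otimes>\<^sub>M ?Q) (\<lambda>\<omega>. (clump_data x (\<Phi> (fst \<omega>)), ?V \<omega>))
      = distr ?Q clump_space (clump_data x) \<Otimes>\<^sub>M ?Q" .
  note product = indep_of_product_joint_law[OF N U V joint Q.prob_space_distr[OF data_meas]
      sets_distr Q.prob_space_axioms refl data_meas[of y]]
  show "distr ?N ?Q ?V = ?Q" by (rule product(1))
  show "prob_space.indep_var ?N clump_space (\<lambda>\<omega>. clump_data x (\<Phi> (fst \<omega>)))
      clump_space (\<lambda>\<omega>. clump_data y (?V \<omega>))" by (rule product(2))
  have "AE p in distr ?N (?Q \<Otimes>\<^sub>M ?Q) \<Psi>. clump (fst p) y \<subseteq> clump (fst p) x \<union> clump (resample_clump x p) y"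
    unfolding \<Psi>(2) by (rule AE_clump_resample_cover[OF Q.prob_space_axioms fin])
  from AE_distrD[OF \<Psi>(1) this]
  show "AE \<omega> in ?N. clump (\<Phi> (fst \<omega>)) y \<subseteq> clump (\<Phi> (fst \<omega>)) x \<union> clump (?V \<omega>) y"
    by (simp add: decoupled_config_def \<Psi>_def)
qed

text \<open>Below the critical intensity the clump of x is almost surely finite, which is all the
  construction needs.\<close>

theorem lemma1:
  fixes lam :: real
    and nu :: "(nat \<times> real) measure"
    and M :: "'a measure"
    and X :: "int ^ 'd::finite \<Rightarrow> 'a \<Rightarrow> real \<times> nat"
    and x y :: "int ^ 'd"
  assumes lam_pos: "0 < lam"
    and subcrit: "ereal lam < lambda_c TYPE('d) nu"
    and nu_prob: "prob_space nu"
    and nu_sets: "sets nu = sets borel"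
    and R_pos: "AE p in nu. fst p \<ge> 1"
    and sigma_nonneg: "AE p in nu. snd p \<ge> 0"
    and M_prob: "prob_space M"
    and X_indep: "prob_space.indep_vars M (\<lambda>_. borel) X UNIV"
    and X_law: "\<And>z. distr M borel (X z) = site_law lam nu"
    and xy: "x \<noteq> y"
  shows "\<exists>(N :: ('a \<times> (int ^ 'd \<Rightarrow> real \<times> nat)) measure) \<pi> Y.
           prob_space N \<and>
           \<pi> \<in> measurable N M \<and> distr N M \<pi> = M \<and>
           prob_space.indep_vars N (\<lambda>_. borel) Y UNIV \<and>
           (\<forall>z. distr N borel (Y z) = site_law lam nu) \<and>
           (AE \<omega> in N.
              clump (\<lambda>z. X z (\<pi> \<omega>)) x \<union> clump (\<lambda>z. X z (\<pi> \<omega>)) y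
                \<subseteq> clump (\<lambda>z. X z (\<pi> \<omega>)) x \<union> clump (\<lambda>z. Y z \<omega>) y) \<and>
           prob_space.indep_var N
              clump_space (\<lambda>\<omega>. (clump (\<lambda>z. X z (\<pi> \<omega>)) x, clump_height (\<lambda>z. X z (\<pi> \<omega>)) x))
              clump_space (\<lambda>\<omega>. (clump (\<lambda>z. Y z \<omega>) y, clump_height (\<lambda>z. Y z \<omega>) y)) \<and>
           distr N clump_space (\<lambda>\<omega>. (clump (\<lambda>z. Y z \<omega>) y, clump_height (\<lambda>z. Y z \<omega>) y))
             = distr M clump_space (\<lambda>\<omega>. (clump (\<lambda>z. X z \<omega>) y, clump_height (\<lambda>z. X z \<omega>) y))"
proof -
  let ?S = "site_law lam nu"
  let ?Q = "PiM (UNIV :: (int^'d) set) (\<lambda>_. ?S)"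
  interpret M: prob_space M by (rule M_prob)
  have "X x \<in> measurable M borel" using X_indep by (auto simp: M.indep_vars_def)
  then have S: "prob_space ?S" using M.prob_space_distr X_law[of x] by metis
  have sS: "sets ?S = sets borel" by (metis X_law sets_distr)
  have fin: "AE F in ?Q. finite (clump F x)"
    by (rule clump_finite_below_lambda_c[OF lam_pos subcrit])
  define \<Phi> where "\<Phi> a = (\<lambda>z. X z a)" for a
  have \<Phi>: "\<Phi> \<in> measurable M ?Q" "distr M ?Q \<Phi> = ?Q"
    unfolding \<Phi>_def[abs_def] using iid_family_distr_PiM[OF M_prob X_indep X_law sS] by auto
  define N where "N = M \<Otimes>\<^sub>M ?Q"
  define V where "V = decoupled_config x \<Phi>"
  note decoupled = decoupled_config_properties[OF M_prob S sS \<Phi> fin, folded N_def V_def]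
  interpret Q: prob_space ?Q by (intro prob_space_PiM S)
  have N: "prob_space N" unfolding N_def by (intro prob_space_pair M_prob Q.prob_space_axioms)
  have Y: "prob_space.indep_vars N (\<lambda>_. borel) (\<lambda>z \<omega>. V \<omega> z) UNIV" "\<forall>z. distr N borel (\<lambda>\<omega>. V \<omega> z) = ?S"
    using iid_family_of_distr_PiM[OF N decoupled(1,2) S sS] by auto
  note data_meas = measurable_clump_data_site[OF sS, of y]
  have law_y: "distr N clump_space (\<lambda>\<omega>. clump_data y (V \<omega>)) = distr M clump_space (\<lambda>a. clump_data y (\<Phi> a))"
    using distr_distr[OF data_meas decoupled(1)] distr_distr[OF data_meas \<Phi>(1)] decoupled(2) \<Phi>(2)
    by (simp add: comp_def)
  show ?thesis
    using N Y decoupled(3,4) law_y Q.distr_pair_fst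
    by (intro exI[of _ N] exI[of _ fst] exI[of _ "\<lambda>z \<omega>. V \<omega> z"] conjI)
      (simp_all add: N_def \<Phi>_def clump_data_def)
qed

end
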